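(* Let $K$ be a finite simplicial complex, $n$ a positive integer, $\sigma_1,\ldots,\sigma_m$ the $(n+1)$-simplices of $K$, and $f$ a generic injective filtration function on $K$. Let $\alpha$ be an $n$-cycle whose class $[\alpha]\in H_n(K^f_a)$ is born at $a$ and terminated at a finite value $b>a$, let $D=(0,\frac{b-a}{2}]$, and let $\Sigma_\varepsilon$ ($\varepsilon\in D$) be as in the context. Assume $|\Sigma_x|\ge 2$ for some $x\in D$. Let $t_0=\max\{x\in D: |\Sigma_x|=1\}$ and write $\Sigma_{t_0}=\{\Delta_1\}$. Then there exist indices $i,j$ with $f(\sigma_j)-t_0=f(\sigma_i)+t_0$. Choose $t\in D$, $t>t_0$, such that $|\Sigma_t|=\lim_{x\searrow t_0}|\Sigma_x|$. Then: (1) $\Delta_1\in\{\sigma_i,\sigma_j\}$; (2) for every $s<t_0$, $\Delta_1$ is a maximal simplex of $K^f_{f(\Delta_1)+2s}$ (i.e. it is not a proper face of any simplex of $K^f_{f(\Delta_1)+2s}$); (3) if $\Delta_1=\sigma_j$, then $\{\sigma_i,\sigma_j\}\subseteq\Sigma_t$ and $\sigma_i$ is a terminal simplex in $K^f$ (it terminates a nontrivial homology class); (4) if $\Delta_1=\sigma_i$, then $\{\sigma_i,\sigma_j\}\subseteq\Sigma_t$ and $\sigma_j$ is a birth simplex in $K^f$ (it creates a nontrivial homology class).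
   Context: A filtration function on a finite simplicial complex $K$ is a map $f\colon K\to\mathbb{R}$ with $f(\sigma)\le f(\tau)$ whenever $\sigma$ is a face of $\tau$. An injective filtration function $f$ is generic if $|f(\sigma_i)-f(\sigma_j)|=|f(\sigma_{i'})-f(\sigma_{j'})|$ with $i\ne j$, $i'\ne j'$ implies $\{i,j\}=\{i',j'\}$. Sublevel complexes are $K^f_r=f^{-1}((-\infty,r])$; homology is with coefficients in a fixed field. For a nontrivial class $[\alpha]\in H_n(K^f_r)$, its birth is the infimum of $q\le r$ such that $[\alpha]$ is in the image of $H_n(K^f_q)\to H_n(K^f_r)$, and its termination scale is the infimum of $q\ge r$ such that $[\alpha]$ maps to $0$ in $H_n(K^f_q)$. Since $f$ is injective, each simplex $\sigma$ either is a birth simplex (adding it to $K^f_{<f(\sigma)}$ creates a new nontrivial homology class, i.e. $\partial\sigma$ is already a boundary there) or a terminal simplex (adding it makes a nontrivial homology class trivial). $\|f-g\|_\infty=\max_{\sigma\in K}|f(\sigma)-g(\sigma)|$. An injective $\varepsilon$-perturbation of $f$ is an injective filtration function $g$ with $\|f-g\|_\infty\le\varepsilon$. For such $g$, $\Delta_{g,\alpha}$ is the simplex $\tau$ such that $\alpha$ is a boundary in $K^g_{g(\tau)}$ but not in $K^g_r$ for $r<g(\tau)$, and $\Sigma_\varepsilon=\{\Delta_{g,\alpha}: g\text{ an injective }\varepsilon\text{-perturbation of }f\}$. *)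

theory Defs
  imports "HOL-Analysis.Analysis"
begin

text \<open>Finite simplicial complexes: a simplex is a nonempty finite set of vertices;
  vertices carry a linear order used to orient simplices.\<close>

definition simplicial_complex :: "'v set set \<Rightarrow> bool" where
  "simplicial_complex K \<longleftrightarrow> finite K \<and>
     (\<forall>\<sigma>\<in>K. finite \<sigma> \<and> \<sigma> \<noteq> {}) \<and>
     (\<forall>\<sigma>\<in>K. \<forall>\<tau>. \<tau> \<subseteq> \<sigma> \<and> \<tau> \<noteq> {} \<longrightarrow> \<tau> \<in> K)"

text \<open>Simplicial k-chains with field coefficients supported in a subcomplex L
  (a k-simplex has k+1 vertices).\<close>

definition chains :: "'v set set \<Rightarrow> nat \<Rightarrow> ('v set \<Rightarrow> 'k::field) set" where
  "chains L k = {c. \<forall>\<sigma>. c \<sigma> \<noteq> 0 \<longrightarrow> \<sigma> \<in> L \<and> card \<sigma> = Suc k}"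

definition bd :: "'v::linorder set set \<Rightarrow> ('v set \<Rightarrow> 'k::field) \<Rightarrow> 'v set \<Rightarrow> 'k" where
  "bd K c \<tau> = (\<Sum>\<sigma>\<in>{\<sigma>\<in>K. \<tau> \<subseteq> \<sigma> \<and> card \<sigma> = Suc (card \<tau>)}.
                  \<Sum>v\<in>\<sigma> - \<tau>. (-1) ^ card {u\<in>\<sigma>. u < v} * c \<sigma>)"

definition elem_chain :: "'v set \<Rightarrow> 'v set \<Rightarrow> 'k::field" where
  "elem_chain \<sigma> = (\<lambda>\<tau>. if \<tau> = \<sigma> then 1 else 0)"

definition is_boundary :: "'v::linorder set set \<Rightarrow> 'v set set \<Rightarrow> nat \<Rightarrow> ('v set \<Rightarrow> 'k::field) \<Rightarrow> bool" where
  "is_boundary K L k c \<longleftrightarrow> (\<exists>d \<in> chains L (Suc k). bd K d = c)"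

definition is_cycle :: "'v::linorder set set \<Rightarrow> 'v set set \<Rightarrow> nat \<Rightarrow> ('v set \<Rightarrow> 'k::field) \<Rightarrow> bool" where
  "is_cycle K L k c \<longleftrightarrow> c \<in> chains L k \<and> bd K c = (\<lambda>_. 0)"

definition filtration :: "'v set set \<Rightarrow> ('v set \<Rightarrow> real) \<Rightarrow> bool" where
  "filtration K f \<longleftrightarrow> (\<forall>\<sigma>\<in>K. \<forall>\<tau>\<in>K. \<sigma> \<subseteq> \<tau> \<longrightarrow> f \<sigma> \<le> f \<tau>)"

definition injective_filtration :: "'v set set \<Rightarrow> ('v set \<Rightarrow> real) \<Rightarrow> bool" where
  "injective_filtration K f \<longleftrightarrow> filtration K f \<and> inj_on f K"

definition generic :: "'v set set \<Rightarrow> ('v set \<Rightarrow> real) \<Rightarrow> bool" where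
  "generic K f \<longleftrightarrow> injective_filtration K f \<and>
     (\<forall>s1\<in>K. \<forall>s2\<in>K. \<forall>s3\<in>K. \<forall>s4\<in>K. s1 \<noteq> s2 \<longrightarrow> s3 \<noteq> s4 \<longrightarrow>
        \<bar>f s1 - f s2\<bar> = \<bar>f s3 - f s4\<bar> \<longrightarrow> {s1, s2} = {s3, s4})"

definition sublevel :: "'v set set \<Rightarrow> ('v set \<Rightarrow> real) \<Rightarrow> real \<Rightarrow> 'v set set" where
  "sublevel K f r = {\<sigma>\<in>K. f \<sigma> \<le> r}"

definition strict_sublevel :: "'v set set \<Rightarrow> ('v set \<Rightarrow> real) \<Rightarrow> real \<Rightarrow> 'v set set" where
  "strict_sublevel K f r = {\<sigma>\<in>K. f \<sigma> < r}"

definition born_at :: "'v::linorder set set \<Rightarrow> ('v set \<Rightarrow> real) \<Rightarrow> nat \<Rightarrow> ('v set \<Rightarrow> 'k::field) \<Rightarrow> real \<Rightarrow> real \<Rightarrow> bool" where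
  "born_at K f n \<alpha> r a \<longleftrightarrow>
     a = Inf {q. q \<le> r \<and> (\<exists>\<alpha>'. is_cycle K (sublevel K f q) n \<alpha>' \<and>
                         is_boundary K (sublevel K f r) n (\<lambda>\<sigma>. \<alpha> \<sigma> - \<alpha>' \<sigma>))}"

definition terminated_at :: "'v::linorder set set \<Rightarrow> ('v set \<Rightarrow> real) \<Rightarrow> nat \<Rightarrow> ('v set \<Rightarrow> 'k::field) \<Rightarrow> real \<Rightarrow> real \<Rightarrow> bool" where
  "terminated_at K f n \<alpha> r b \<longleftrightarrow>
     (let S = {q. q \<ge> r \<and> is_boundary K (sublevel K f q) n \<alpha>} in S \<noteq> {} \<and> b = Inf S)"

definition birth_simplex :: "'v::linorder set set \<Rightarrow> ('v set \<Rightarrow> real) \<Rightarrow> 'k::field itself \<Rightarrow> 'v set \<Rightarrow> bool" where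
  "birth_simplex K f (_::'k itself) \<sigma> \<longleftrightarrow> \<sigma> \<in> K \<and>
     is_boundary K (strict_sublevel K f (f \<sigma>)) (card \<sigma> - 2) (bd K (elem_chain \<sigma> :: 'v set \<Rightarrow> 'k))"

definition terminal_simplex :: "'v::linorder set set \<Rightarrow> ('v set \<Rightarrow> real) \<Rightarrow> 'k::field itself \<Rightarrow> 'v set \<Rightarrow> bool" where
  "terminal_simplex K f (_::'k itself) \<sigma> \<longleftrightarrow> \<sigma> \<in> K \<and>
     (\<exists>z :: 'v set \<Rightarrow> 'k.
        is_cycle K (strict_sublevel K f (f \<sigma>)) (card \<sigma> - 2) z \<and>
        \<not> is_boundary K (strict_sublevel K f (f \<sigma>)) (card \<sigma> - 2) z \<and>
        is_boundary K (insert \<sigma> (strict_sublevel K f (f \<sigma>))) (card \<sigma> - 2) z)"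

definition inj_perturbation :: "'v set set \<Rightarrow> ('v set \<Rightarrow> real) \<Rightarrow> real \<Rightarrow> ('v set \<Rightarrow> real) \<Rightarrow> bool" where
  "inj_perturbation K f \<epsilon> g \<longleftrightarrow> injective_filtration K g \<and> (\<forall>\<sigma>\<in>K. \<bar>f \<sigma> - g \<sigma>\<bar> \<le> \<epsilon>)"

definition Delta_set :: "'v::linorder set set \<Rightarrow> ('v set \<Rightarrow> real) \<Rightarrow> nat \<Rightarrow> ('v set \<Rightarrow> 'k::field) \<Rightarrow> real \<Rightarrow> 'v set set" where
  "Delta_set K f n \<alpha> \<epsilon> = {\<tau>. \<exists>g. inj_perturbation K f \<epsilon> g \<and> \<tau> \<in> K \<and>
      is_boundary K (sublevel K g (g \<tau>)) n \<alpha> \<and>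
      (\<forall>r < g \<tau>. \<not> is_boundary K (sublevel K g r) n \<alpha>)}"

end

theory Submission
  imports Defs
begin

(*
  Let \<sigma>b be the (n+1)-simplex whose entrance kills the class of \<alpha>, so f \<sigma>b = b.  A perturbation
  g can only make another (n+1)-simplex \<rho> the killer of \<alpha> if \<rho> overtakes \<sigma>b.  If f \<rho> > b,
  then \<rho> must be the first simplex after which \<alpha> bounds without \<sigma>b; lowering \<rho> and raising
  the star of \<sigma>b by e > (f \<rho> - b)/2 does the job, and \<rho> is a birth simplex because \<alpha> then has
  two fillings differing in \<rho>.  If f \<rho> < b, then \<rho> must be the first simplex after which \<alpha>
  bounds once \<sigma>b is added; raising everything but the faces of \<sigma>b by e > (b - f \<rho>)/2 does the
  job, and \<rho> is terminal because a filling of \<partial>\<rho> before f \<rho> could replace \<rho>.  Conversely every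
  element of \<Sigma>_\<epsilon> other than \<sigma>b produces such a "rival" within 2\<epsilon> of b.  Hence \<Sigma>_\<epsilon> = {\<sigma>b}
  exactly as long as 2\<epsilon> does not exceed the distance from b to the nearest rival, and this
  distance is 2 t0.  For the maximality of \<sigma>b: a coface \<sigma>b \<union> {w} lets one remove \<sigma>b from a
  filling of \<alpha>, which yields a rival not later than f (\<sigma>b \<union> {w}).
*)

section \<open>Simplicial chains\<close>

lemma simplicial_complex_finite: "simplicial_complex K \<Longrightarrow> finite K"
  unfolding simplicial_complex_def by auto

lemma simplicial_complex_finite_simplex: "simplicial_complex K \<Longrightarrow> \<sigma> \<in> K \<Longrightarrow> finite \<sigma>"
  unfolding simplicial_complex_def by auto

lemma simplicial_complex_face:
  "simplicial_complex K \<Longrightarrow> \<sigma> \<in> K \<Longrightarrow> \<tau> \<subseteq> \<sigma> \<Longrightarrow> \<tau> \<noteq> {} \<Longrightarrow> \<tau> \<in> K"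
  unfolding simplicial_complex_def by blast

lemma chains_mono: "L \<subseteq> L' \<Longrightarrow> Defs.chains L k \<subseteq> Defs.chains L' k"
  unfolding chains_def by auto

lemma is_boundary_mono: "L \<subseteq> L' \<Longrightarrow> is_boundary K L k c \<Longrightarrow> is_boundary K L' k c"
  unfolding is_boundary_def using chains_mono by blast

lemma mono_is_boundary:
  fixes F :: "'a set \<Rightarrow> 'v::linorder set set"
  assumes "\<And>L L'. L \<subseteq> L' \<Longrightarrow> F L \<subseteq> F L'"
  shows "mono (\<lambda>L. is_boundary K (F L) k c)"
proof (rule monoI)
  fix L L' :: "'a set" assume "L \<subseteq> L'"
  then show "is_boundary K (F L) k c \<le> is_boundary K (F L') k c"
    using assms is_boundary_mono[of "F L" "F L'"] by auto
qed

lemma is_boundary_if_top_subset: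
  "is_boundary K L k c \<Longrightarrow> L \<inter> {\<sigma>. card \<sigma> = Suc (Suc k)} \<subseteq> L' \<Longrightarrow> is_boundary K L' k c"
  unfolding is_boundary_def chains_def by blast

lemma bd_add: "bd K (\<lambda>x. c1 x + c2 x) = (\<lambda>x. bd K c1 x + bd K c2 x)"
  unfolding bd_def by (auto simp: distrib_left sum.distrib)

lemma bd_diff: "bd K (\<lambda>x. c1 x - c2 x) = (\<lambda>x. bd K c1 x - bd K c2 x)"
  unfolding bd_def by (auto simp: right_diff_distrib sum_subtractf)

lemma bd_scale: "bd K (\<lambda>x. k * c x) = (\<lambda>x. k * bd K c x)"
  unfolding bd_def by (auto simp: sum_distrib_left mult.left_commute)

lemma bd_elem_chain:
  assumes "finite K"
  shows "bd K (elem_chain \<rho> :: 'v::linorder set \<Rightarrow> 'k::field) \<tau> =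
    (if \<rho> \<in> K \<and> \<tau> \<subseteq> \<rho> \<and> card \<rho> = Suc (card \<tau>)
     then (\<Sum>v\<in>\<rho> - \<tau>. (-1) ^ card {u\<in>\<rho>. u < v}) else 0)"
proof -
  let ?S = "{\<sigma>\<in>K. \<tau> \<subseteq> \<sigma> \<and> card \<sigma> = Suc (card \<tau>)}"
  have "bd K (elem_chain \<rho> :: 'v set \<Rightarrow> 'k) \<tau> =
     (\<Sum>\<sigma>\<in>?S. if \<sigma> = \<rho> then (\<Sum>v\<in>\<sigma> - \<tau>. (-1) ^ card {u\<in>\<sigma>. u < v}) else 0)"
    unfolding bd_def elem_chain_def by (rule sum.cong) auto
  then show ?thesis
    using assms by (simp add: sum.delta)
qed

lemma bd_elem_chain_nonzero:
  "finite K \<Longrightarrow> bd K (elem_chain \<rho> :: 'v::linorder set \<Rightarrow> 'k::field) \<tau> \<noteq> 0 \<Longrightarrow>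
    \<tau> \<subseteq> \<rho> \<and> card \<rho> = Suc (card \<tau>)"
  by (auto simp: bd_elem_chain split: if_splits)

lemma bd_elem_chain_facet:
  assumes "finite K" "\<rho> \<in> K" "finite \<tau>" "v \<notin> \<tau>" "\<rho> = insert v \<tau>"
  shows "bd K (elem_chain \<rho> :: 'v::linorder set \<Rightarrow> 'k::field) \<tau> = (-1) ^ card {u\<in>\<rho>. u < v}"
proof -
  have "\<rho> - \<tau> = {v}" "\<tau> \<subseteq> \<rho>" "card \<rho> = Suc (card \<tau>)"
    using assms by auto
  then show ?thesis
    using assms(1,2) by (simp add: bd_elem_chain)
qed

lemma bd_bd_elem_chain:
  assumes K: "simplicial_complex K" and \<rho>: "\<rho> \<in> K"
  shows "bd K (bd K (elem_chain \<rho> :: 'v::linorder set \<Rightarrow> 'k::field)) \<tau> = 0"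
proof -
  have finK: "finite K" and fin\<rho>: "finite \<rho>"
    using K \<rho> by (auto simp: simplicial_complex_finite simplicial_complex_finite_simplex)
  define c where "c = bd K (elem_chain \<rho> :: 'v set \<Rightarrow> 'k)"
  let ?S = "{\<sigma>\<in>K. \<tau> \<subseteq> \<sigma> \<and> card \<sigma> = Suc (card \<tau>)}"
  let ?term = "\<lambda>\<sigma>. \<Sum>v\<in>\<sigma> - \<tau>. (-1) ^ card {u\<in>\<sigma>. u < v} * c \<sigma>"
  have bd_c: "bd K c \<tau> = (\<Sum>\<sigma>\<in>?S. ?term \<sigma>)"
    unfolding bd_def by simp
  show ?thesis
  proof (cases "\<tau> \<subseteq> \<rho> \<and> card \<rho> = Suc (Suc (card \<tau>))")
    case False
    then have "c \<sigma> = 0" if "\<sigma> \<in> ?S" for \<sigma>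
      using that bd_elem_chain_nonzero[OF finK, of \<rho> \<sigma>] unfolding c_def by auto
    then show ?thesis
      unfolding c_def[symmetric] bd_c by simp
  next
    case True
    have fin\<tau>: "finite \<tau>"
      using True fin\<rho> finite_subset by blast
    have "card (\<rho> - \<tau>) = 2"
      using True fin\<rho> by (simp add: card_Diff_subset fin\<tau>)
    then obtain v w where vw: "\<rho> - \<tau> = {v, w}" "v < w"
      by (auto simp: card_2_iff neq_iff)
    then have v: "v \<notin> \<tau>" "v \<in> \<rho>" and w: "w \<notin> \<tau>" "w \<in> \<rho>"
      by auto
    define \<sigma>v where "\<sigma>v = insert v \<tau>"
    define \<sigma>w where "\<sigma>w = insert w \<tau>"
    have \<rho>_eq: "\<rho> = insert w \<sigma>v" "\<rho> = insert v \<sigma>w"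
      using vw True unfolding \<sigma>v_def \<sigma>w_def by auto
    have \<sigma>vw: "\<sigma>v \<in> ?S" "\<sigma>w \<in> ?S" "\<sigma>v \<noteq> \<sigma>w"
      using simplicial_complex_face[OF K \<rho>] v w vw fin\<tau> True unfolding \<sigma>v_def \<sigma>w_def by auto
    have only_two: "c \<sigma> = 0" if "\<sigma> \<in> ?S - {\<sigma>v, \<sigma>w}" for \<sigma>
    proof (rule ccontr)
      assume "c \<sigma> \<noteq> 0"
      then have "\<sigma> \<subseteq> \<rho>"
        using bd_elem_chain_nonzero[OF finK] unfolding c_def by blast
      moreover have "card (\<sigma> - \<tau>) = 1"
        using that calculation fin\<rho> by (auto simp: card_Diff_subset fin\<tau> finite_subset)
      then obtain z where z: "\<sigma> - \<tau> = {z}"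
        by (auto simp: card_1_singleton_iff)
      then have "\<sigma> = insert z \<tau>" "z = v \<or> z = w"
        using that \<open>\<sigma> \<subseteq> \<rho>\<close> vw(1) by auto
      then show False
        using that unfolding \<sigma>v_def \<sigma>w_def by auto
    qed
    have "bd K c \<tau> = ?term \<sigma>v + ?term \<sigma>w"
      unfolding bd_c
      by (subst sum.mono_neutral_right[of ?S "{\<sigma>v, \<sigma>w}"]) (use finK \<sigma>vw only_two in auto)
    also have "\<dots> = (-1) ^ card {u\<in>\<tau>. u < v} * c \<sigma>v + (-1) ^ card {u\<in>\<tau>. u < w} * c \<sigma>w"
    proof -
      have "\<sigma>v - \<tau> = {v}" "\<sigma>w - \<tau> = {w}" "{u\<in>\<sigma>v. u < v} = {u\<in>\<tau>. u < v}" "{u\<in>\<sigma>w. u < w} = {u\<in>\<tau>. u < w}"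
        using v w unfolding \<sigma>v_def \<sigma>w_def by auto
      then show ?thesis by simp
    qed
    also have "\<dots> = 0"
    proof -
      have "c \<sigma>v = (-1) ^ card {u\<in>\<rho>. u < w}" "c \<sigma>w = (-1) ^ card {u\<in>\<rho>. u < v}"
        unfolding c_def
        by (rule bd_elem_chain_facet[OF finK \<rho>]; use \<rho>_eq v w vw(2) fin\<tau> in \<open>auto simp: \<sigma>v_def \<sigma>w_def\<close>)+
      moreover have "{u\<in>\<rho>. u < w} = insert v {u\<in>\<tau>. u < w}" "{u\<in>\<rho>. u < v} = {u\<in>\<tau>. u < v}"
        using \<rho>_eq(1) vw(2) unfolding \<sigma>v_def by auto
      ultimately show ?thesis
        using fin\<tau> v by simp
    qed
    finally show ?thesis
      unfolding c_def .
  qed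
qed

lemma elem_chain_in_chains: "card \<rho> = Suc k \<Longrightarrow> elem_chain \<rho> \<in> Defs.chains {\<rho>} k"
  unfolding chains_def elem_chain_def by auto

lemma bd_elem_chain_in_chains:
  assumes K: "simplicial_complex K" and "\<rho> \<in> K" "card \<rho> = Suc (Suc k)"
  shows "bd K (elem_chain \<rho> :: 'v::linorder set \<Rightarrow> 'k::field) \<in> Defs.chains {\<sigma>\<in>K. \<sigma> \<subset> \<rho>} k"
  unfolding chains_def
proof (intro CollectI allI impI)
  fix \<sigma> assume "bd K (elem_chain \<rho> :: 'v set \<Rightarrow> 'k) \<sigma> \<noteq> 0"
  then have "\<sigma> \<subseteq> \<rho>" "card \<rho> = Suc (card \<sigma>)"
    using bd_elem_chain_nonzero[OF simplicial_complex_finite[OF K]] by blast+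
  moreover have "\<sigma> \<noteq> {}"
    using calculation(2) assms(3) by auto
  ultimately show "\<sigma> \<in> {\<sigma>\<in>K. \<sigma> \<subset> \<rho>} \<and> card \<sigma> = Suc k"
    using simplicial_complex_face[OF K \<open>\<rho> \<in> K\<close>] assms(3) by auto
qed

lemma is_boundary_replace_simplex:
  fixes \<alpha> :: "'v::linorder set \<Rightarrow> 'k::field"
  assumes "is_boundary K L k (bd K (elem_chain \<rho> :: 'v set \<Rightarrow> 'k))"
    and "is_boundary K (insert \<rho> L) k \<alpha>"
  shows "is_boundary K L k \<alpha>"
proof -
  obtain d where d: "d \<in> Defs.chains L (Suc k)" "bd K d = bd K (elem_chain \<rho> :: 'v set \<Rightarrow> 'k)"
    using assms(1) unfolding is_boundary_def by blast
  obtain c where c: "c \<in> Defs.chains (insert \<rho> L) (Suc k)" "bd K c = \<alpha>"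
    using assms(2) unfolding is_boundary_def by blast
  define c' where "c' = (\<lambda>\<sigma>. c \<sigma> - c \<rho> * elem_chain \<rho> \<sigma> + c \<rho> * d \<sigma>)"
  have "bd K c' = \<alpha>"
    unfolding c'_def bd_add bd_diff bd_scale d(2) c(2)[symmetric] by simp
  moreover have "c' \<in> Defs.chains L (Suc k)"
    unfolding chains_def
  proof (intro CollectI allI impI)
    fix \<sigma> assume "c' \<sigma> \<noteq> 0"
    then have "(c \<sigma> \<noteq> 0 \<and> \<sigma> \<noteq> \<rho>) \<or> d \<sigma> \<noteq> 0"
      unfolding c'_def elem_chain_def by (cases "\<sigma> = \<rho>") auto
    then show "\<sigma> \<in> L \<and> card \<sigma> = Suc (Suc k)"
      using c(1) d(1) unfolding chains_def by auto
  qed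
  ultimately show ?thesis
    unfolding is_boundary_def by blast
qed

text \<open>Two fillings of \<alpha>, one of them using \<rho> with a nonzero coefficient, differ by a
  multiple of \<rho> plus a filling of \<partial>\<rho>.\<close>

lemma is_boundary_bd_elem_chain:
  fixes \<alpha> :: "'v::linorder set \<Rightarrow> 'k::field"
  assumes "is_boundary K M k \<alpha>" and "is_boundary K (insert \<rho> L) k \<alpha>"
    and "\<not> is_boundary K L k \<alpha>" and "L \<subseteq> M"
  shows "is_boundary K M k (bd K (elem_chain \<rho> :: 'v set \<Rightarrow> 'k))"
proof -
  obtain c0 where c0: "c0 \<in> Defs.chains M (Suc k)" "bd K c0 = \<alpha>"
    using assms(1) unfolding is_boundary_def by blast
  obtain c where c: "c \<in> Defs.chains (insert \<rho> L) (Suc k)" "bd K c = \<alpha>"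
    using assms(2) unfolding is_boundary_def by blast
  have "c \<rho> \<noteq> 0"
  proof
    assume "c \<rho> = 0"
    then have "c \<in> Defs.chains L (Suc k)"
      using c(1) unfolding chains_def by auto
    then show False
      using assms(3) c(2) unfolding is_boundary_def by blast
  qed
  define d where "d = (\<lambda>\<sigma>. inverse (c \<rho>) * (c0 \<sigma> - c \<sigma> + c \<rho> * elem_chain \<rho> \<sigma>))"
  have "bd K d = bd K (elem_chain \<rho>)"
    unfolding d_def bd_add bd_diff bd_scale c0(2) c(2) using \<open>c \<rho> \<noteq> 0\<close> by (simp add: field_simps)
  moreover have "d \<in> Defs.chains M (Suc k)"
    unfolding chains_def
  proof (intro CollectI allI impI)
    fix \<sigma> assume "d \<sigma> \<noteq> 0"
    then have "c0 \<sigma> \<noteq> 0 \<or> (c \<sigma> \<noteq> 0 \<and> \<sigma> \<noteq> \<rho>)"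
      unfolding d_def elem_chain_def by (cases "\<sigma> = \<rho>") auto
    then show "\<sigma> \<in> M \<and> card \<sigma> = Suc (Suc k)"
      using c0(1) c(1) \<open>L \<subseteq> M\<close> unfolding chains_def by auto
  qed
  ultimately show ?thesis
    unfolding is_boundary_def by metis
qed

text \<open>The coefficient of the facet \<rho> in \<partial>\<tau> is \<plusminus>1, so subtracting a multiple of the cycle \<partial>\<tau>
  clears \<rho> from a filling.\<close>

lemma is_boundary_avoiding_facet:
  fixes \<alpha> :: "'v::linorder set \<Rightarrow> 'k::field"
  assumes K: "simplicial_complex K" and \<alpha>: "is_boundary K L k \<alpha>"
    and \<tau>: "\<tau> \<in> K" "\<tau> = insert w \<rho>" "w \<notin> \<rho>"
  shows "is_boundary K (L \<union> {\<sigma>\<in>K. \<sigma> \<subset> \<tau>} - {\<rho>}) k \<alpha>"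
proof -
  have finK: "finite K"
    using K by (rule simplicial_complex_finite)
  obtain c where c: "c \<in> Defs.chains L (Suc k)" "bd K c = \<alpha>"
    using \<alpha> unfolding is_boundary_def by blast
  define \<mu> where "\<mu> = bd K (elem_chain \<tau> :: 'v set \<Rightarrow> 'k) \<rho>"
  have "\<mu> = (-1) ^ card {u\<in>\<tau>. u < w}"
    unfolding \<mu>_def by (rule bd_elem_chain_facet[OF finK \<tau>(1) _ \<tau>(3,2)])
      (use simplicial_complex_finite_simplex[OF K \<tau>(1)] \<tau>(2) in auto)
  then have "\<mu> \<noteq> 0"
    by simp
  define c' where "c' = (\<lambda>\<sigma>. c \<sigma> - (c \<rho> / \<mu>) * bd K (elem_chain \<tau> :: 'v set \<Rightarrow> 'k) \<sigma>)"
  have "bd K c' = \<alpha>"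
    unfolding c'_def bd_diff bd_scale bd_bd_elem_chain[OF K \<tau>(1)] c(2) by simp
  moreover have "c' \<in> Defs.chains (L \<union> {\<sigma>\<in>K. \<sigma> \<subset> \<tau>} - {\<rho>}) (Suc k)"
    unfolding chains_def
  proof (intro CollectI allI impI)
    fix \<sigma> assume c'\<sigma>: "c' \<sigma> \<noteq> 0"
    have "\<sigma> \<noteq> \<rho>"
      using c'\<sigma> \<open>\<mu> \<noteq> 0\<close> unfolding c'_def \<mu>_def by auto
    moreover have "\<sigma> \<in> L \<union> {\<sigma>\<in>K. \<sigma> \<subset> \<tau>} \<and> card \<sigma> = Suc (Suc k)"
    proof (cases "c \<sigma> = 0")
      case True
      then have "c \<rho> \<noteq> 0" "bd K (elem_chain \<tau> :: 'v set \<Rightarrow> 'k) \<sigma> \<noteq> 0"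
        using c'\<sigma> unfolding c'_def by auto
      moreover have "card \<tau> = Suc (Suc (Suc k))"
        using c(1) \<open>c \<rho> \<noteq> 0\<close> \<tau>(2,3) simplicial_complex_finite_simplex[OF K \<tau>(1)]
        unfolding chains_def by auto
      ultimately show ?thesis
        using bd_elem_chain_in_chains[OF K \<tau>(1)] unfolding chains_def by blast
    qed (use c(1) in \<open>auto simp: chains_def\<close>)
    ultimately show "\<sigma> \<in> L \<union> {\<sigma>\<in>K. \<sigma> \<subset> \<tau>} - {\<rho>} \<and> card \<sigma> = Suc (Suc k)"
      by blast
  qed
  ultimately show ?thesis
    unfolding is_boundary_def by blast
qed

section \<open>Sublevel filtrations\<close>

lemma sublevel_mono: "r \<le> r' \<Longrightarrow> sublevel K h r \<subseteq> sublevel K h r'"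
  unfolding sublevel_def by auto

lemma sublevel_eq_insert_strict_sublevel:
  "inj_on h K \<Longrightarrow> \<tau> \<in> K \<Longrightarrow> sublevel K h (h \<tau>) = insert \<tau> (strict_sublevel K h (h \<tau>))"
  unfolding sublevel_def strict_sublevel_def by (auto simp: less_le inj_on_eq_iff)

lemma strict_sublevel_eq_sublevel:
  assumes "finite K"
  shows "\<exists>r<c. strict_sublevel K h c = sublevel K h r"
proof -
  define r where "r = Max (insert (c - 1) (h ` {\<sigma>\<in>K. h \<sigma> < c}))"
  have "r < c"
    unfolding r_def using assms by simp
  moreover have "h \<sigma> \<le> r" if "\<sigma> \<in> K" "h \<sigma> < c" for \<sigma>
    unfolding r_def using assms that by (intro Max_ge) auto
  ultimately have "strict_sublevel K h c = sublevel K h r"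
    unfolding strict_sublevel_def sublevel_def by fastforce
  with \<open>r < c\<close> show ?thesis
    by blast
qed

lemma sublevel_eq_sublevel_value:
  assumes "finite K" "sublevel K h r \<noteq> {}"
  shows "\<exists>\<tau>\<in>K. h \<tau> \<le> r \<and> sublevel K h r = sublevel K h (h \<tau>)"
proof -
  have fin: "finite (h ` sublevel K h r)"
    using assms(1) unfolding sublevel_def by simp
  obtain \<tau> where \<tau>: "\<tau> \<in> sublevel K h r" "h \<tau> = Max (h ` sublevel K h r)"
    using Max_in[OF fin] assms(2) by fastforce
  then have "h \<sigma> \<le> h \<tau>" if "\<sigma> \<in> sublevel K h r" for \<sigma>
    using that fin by simp
  then have "sublevel K h r = sublevel K h (h \<tau>)"
    using \<tau>(1) unfolding sublevel_def by fastforce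
  with \<tau>(1) show ?thesis
    unfolding sublevel_def by blast
qed

lemma mono_predD: "mono P \<Longrightarrow> S \<subseteq> S' \<Longrightarrow> P S \<Longrightarrow> P S'"
  by (metis le_boolD monoD)

definition first_at :: "'v set set \<Rightarrow> ('v set \<Rightarrow> real) \<Rightarrow> ('v set set \<Rightarrow> bool) \<Rightarrow> 'v set \<Rightarrow> bool" where
  "first_at K h P \<tau> \<longleftrightarrow> \<tau> \<in> K \<and> P (sublevel K h (h \<tau>)) \<and> (\<forall>r < h \<tau>. \<not> P (sublevel K h r))"

lemma Delta_set_iff:
  "\<tau> \<in> Delta_set K f n \<alpha> \<epsilon> \<longleftrightarrow>
     (\<exists>g. inj_perturbation K f \<epsilon> g \<and> first_at K g (\<lambda>S. is_boundary K S n \<alpha>) \<tau>)"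
  unfolding Delta_set_def first_at_def by auto

lemma first_at_le: "first_at K h P \<tau> \<Longrightarrow> P (sublevel K h r) \<Longrightarrow> h \<tau> \<le> r"
  unfolding first_at_def by (meson not_le)

lemma first_at_exists:
  assumes "finite K" "mono P" "\<not> P {}" "P (sublevel K h r)"
  shows "\<exists>\<tau>. first_at K h P \<tau> \<and> h \<tau> \<le> r"
proof -
  define T where "T = {\<tau>\<in>K. P (sublevel K h (h \<tau>))}"
  have value_in_T: "\<exists>\<tau>\<in>T. h \<tau> \<le> r'" if "P (sublevel K h r')" for r'
  proof -
    have "sublevel K h r' \<noteq> {}"
      using that assms(3) by auto
    then obtain \<tau> where "\<tau> \<in> K" "h \<tau> \<le> r'" "sublevel K h r' = sublevel K h (h \<tau>)"
      using sublevel_eq_sublevel_value[OF assms(1)] by blast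
    then show ?thesis
      using that unfolding T_def by auto
  qed
  have "finite T" "T \<noteq> {}"
    using assms(1) value_in_T[OF assms(4)] unfolding T_def by auto
  then obtain \<tau> where \<tau>: "\<tau> \<in> T" "\<And>\<sigma>. \<sigma> \<in> T \<Longrightarrow> h \<tau> \<le> h \<sigma>"
    using ex_is_arg_min_if_finite[of T h] unfolding is_arg_min_def by (metis not_less)
  have "\<not> P (sublevel K h r')" if "r' < h \<tau>" for r'
    using value_in_T \<tau>(2) that by (meson le_less_trans not_le)
  then have "first_at K h P \<tau>"
    using \<tau>(1) unfolding first_at_def T_def by blast
  moreover have "h \<tau> \<le> r"
    using value_in_T[OF assms(4)] \<tau>(2) by (meson order_trans)
  ultimately show ?thesis
    by blast
qed

lemma first_at_not_strict:
  assumes "finite K" "first_at K h P \<tau>"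
  shows "\<not> P (strict_sublevel K h (h \<tau>))"
proof -
  obtain r where "r < h \<tau>" "strict_sublevel K h (h \<tau>) = sublevel K h r"
    using strict_sublevel_eq_sublevel[OF assms(1)] by blast
  then show ?thesis
    using assms(2) unfolding first_at_def by simp
qed

lemma first_at_in:
  assumes "finite K" "mono P" "inj_on h K" "\<And>S. P S \<Longrightarrow> P (S \<inter> N)" "first_at K h P \<tau>"
  shows "\<tau> \<in> N"
proof (rule ccontr)
  assume "\<tau> \<notin> N"
  then have "sublevel K h (h \<tau>) \<inter> N \<subseteq> strict_sublevel K h (h \<tau>)"
    using sublevel_eq_insert_strict_sublevel[OF assms(3)] assms(5) unfolding first_at_def by auto
  moreover have "P (sublevel K h (h \<tau>) \<inter> N)"
    using assms(4,5) unfolding first_at_def by blast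
  ultimately show False
    using first_at_not_strict[OF assms(1,5)] mono_predD[OF assms(2)] by blast
qed

lemma first_at_termination:
  assumes "finite K" "\<not> is_boundary K (sublevel K f a) n \<alpha>" "terminated_at K f n \<alpha> a b"
  shows "\<exists>\<sigma>. first_at K f (\<lambda>S. is_boundary K S n \<alpha>) \<sigma> \<and> f \<sigma> = b"
proof -
  define Q where "Q = {q. q \<ge> a \<and> is_boundary K (sublevel K f q) n \<alpha>}"
  obtain q where "q \<in> Q" and b: "b = Inf Q"
    using assms(3) unfolding terminated_at_def Let_def Q_def by auto
  have mono: "mono (\<lambda>S. is_boundary K S n \<alpha>)"
    by (rule mono_is_boundary[where F = "\<lambda>L. L"])
  have "\<not> is_boundary K {} n \<alpha>"
    using assms(2) is_boundary_mono[of "{}"] by blast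
  then obtain \<sigma> where \<sigma>: "first_at K f (\<lambda>S. is_boundary K S n \<alpha>) \<sigma>"
    using first_at_exists[OF assms(1) mono] \<open>q \<in> Q\<close> unfolding Q_def by blast
  have "a \<le> f \<sigma>"
    using \<sigma> assms(2) sublevel_mono[of "f \<sigma>" a K f] is_boundary_mono
    unfolding first_at_def by (meson linear)
  then have "f \<sigma> \<in> Q"
    using \<sigma> unfolding first_at_def Q_def by simp
  moreover have "f \<sigma> \<le> q'" if "q' \<in> Q" for q'
    using that first_at_le[OF \<sigma>] unfolding Q_def by blast
  ultimately have "Inf Q = f \<sigma>"
    by (rule cInf_eq_minimum)
  then show ?thesis
    using \<sigma> b by auto
qed

text \<open>Shifting the up-closed set U up and the rest down keeps f a filtration; injectivity can
  only fail for the finitely many e of the form (f x - f y) / 2.\<close>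

lemma exists_shift_perturbation:
  assumes "finite K" "injective_filtration K f"
    and up: "\<And>\<sigma> \<tau>. \<sigma> \<in> K \<Longrightarrow> \<tau> \<in> K \<Longrightarrow> \<sigma> \<subseteq> \<tau> \<Longrightarrow> \<sigma> \<in> U \<Longrightarrow> \<tau> \<in> U"
    and "0 \<le> l" "l < \<epsilon>"
  shows "\<exists>e. l < e \<and> e \<le> \<epsilon> \<and> inj_perturbation K f \<epsilon> (\<lambda>\<sigma>. if \<sigma> \<in> U then f \<sigma> + e else f \<sigma> - e)"
proof -
  define E where "E = (\<lambda>(x, y). (f x - f y) / 2) ` (K \<times> K)"
  have "finite E"
    unfolding E_def using assms(1) by simp
  then have "{l<..\<epsilon>} - E \<noteq> {}"
    using infinite_Ioc[OF \<open>l < \<epsilon>\<close>] by (metis Diff_eq_empty_iff finite_subset)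
  then obtain e where e: "l < e" "e \<le> \<epsilon>" "e \<notin> E"
    by (meson DiffE ex_in_conv greaterThanAtMost_iff)
  define g where "g = (\<lambda>\<sigma>. if \<sigma> \<in> U then f \<sigma> + e else f \<sigma> - e)"
  have "filtration K g"
    unfolding filtration_def
  proof (intro ballI impI)
    fix \<sigma> \<tau> assume "\<sigma> \<in> K" "\<tau> \<in> K" "\<sigma> \<subseteq> \<tau>"
    moreover have "f \<sigma> \<le> f \<tau>"
      using assms(2) calculation unfolding injective_filtration_def filtration_def by blast
    ultimately show "g \<sigma> \<le> g \<tau>"
      using up[of \<sigma> \<tau>] e(1) \<open>0 \<le> l\<close> unfolding g_def by auto
  qed
  moreover have "inj_on g K"
  proof (rule inj_onI)
    fix x y assume xy: "x \<in> K" "y \<in> K" "g x = g y"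
    have "f x = f y"
    proof (cases "x \<in> U \<longleftrightarrow> y \<in> U")
      case False
      then have "e = (f y - f x) / 2 \<or> e = (f x - f y) / 2"
        using xy(3) unfolding g_def by (auto split: if_splits)
      then have "e \<in> E"
        using xy(1,2) unfolding E_def by force
      then show ?thesis
        using e(3) by blast
    qed (use xy(3) in \<open>auto simp: g_def split: if_splits\<close>)
    then show "x = y"
      using assms(2) xy(1,2) unfolding injective_filtration_def inj_on_def by blast
  qed
  ultimately show ?thesis
    using e(1,2) \<open>0 \<le> l\<close> unfolding inj_perturbation_def injective_filtration_def g_def by auto
qed

section \<open>The simplex killing the cycle\<close>

locale cycle_death =
  fixes K :: "'v::linorder set set" and f :: "'v set \<Rightarrow> real" and n :: nat
    and \<alpha> :: "'v set \<Rightarrow> 'k::field" and \<sigma>b :: "'v set" and b :: real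
  assumes K: "simplicial_complex K" and f: "injective_filtration K f"
    and first: "first_at K f (\<lambda>S. is_boundary K S n \<alpha>) \<sigma>b" and f_\<sigma>b: "f \<sigma>b = b"
begin

lemma finite_K: "finite K"
  using K by (rule simplicial_complex_finite)

lemma inj_f: "inj_on f K"
  using f unfolding injective_filtration_def by blast

lemma f_mono: "\<sigma> \<in> K \<Longrightarrow> \<tau> \<in> K \<Longrightarrow> \<sigma> \<subseteq> \<tau> \<Longrightarrow> f \<sigma> \<le> f \<tau>"
  using f unfolding injective_filtration_def filtration_def by blast

lemma f_eq_iff: "\<sigma> \<in> K \<Longrightarrow> \<tau> \<in> K \<Longrightarrow> f \<sigma> = f \<tau> \<longleftrightarrow> \<sigma> = \<tau>"
  using inj_f by (rule inj_on_eq_iff)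

lemma \<sigma>b_in_K: "\<sigma>b \<in> K"
  using first unfolding first_at_def by blast

lemma card_\<sigma>b: "card \<sigma>b = Suc (Suc n)"
proof -
  have "mono (\<lambda>S. is_boundary K S n \<alpha>)"
    by (rule mono_is_boundary[where F = "\<lambda>L. L"])
  then show ?thesis
    using first_at_in[OF finite_K _ inj_f _ first, of "{\<sigma>. card \<sigma> = Suc (Suc n)}"]
    by (auto intro: is_boundary_if_top_subset)
qed

lemma eq_\<sigma>b_if_comparable:
  assumes "\<sigma> \<in> K" "card \<sigma> = Suc (Suc n)" "\<sigma>b \<subseteq> \<sigma> \<or> \<sigma> \<subseteq> \<sigma>b"
  shows "\<sigma> = \<sigma>b"
  using assms card_\<sigma>b card_subset_eq simplicial_complex_finite_simplex[OF K] \<sigma>b_in_K by metis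

lemma proper_faces_strict_sublevel: "\<rho> \<in> K \<Longrightarrow> {\<sigma>\<in>K. \<sigma> \<subset> \<rho>} \<subseteq> strict_sublevel K f (f \<rho>)"
  unfolding strict_sublevel_def using f_mono f_eq_iff by (fastforce simp: less_le)

lemma is_boundary_sublevel_b: "is_boundary K (sublevel K f b) n \<alpha>"
  using first f_\<sigma>b unfolding first_at_def by simp

lemma not_is_boundary_strict_sublevel_b: "\<not> is_boundary K (strict_sublevel K f b) n \<alpha>"
  using first_at_not_strict[OF finite_K first] f_\<sigma>b by simp

lemma not_is_boundary_empty: "\<not> is_boundary K {} n \<alpha>"
  using not_is_boundary_strict_sublevel_b is_boundary_mono[of "{}"] by blast

lemma \<sigma>b_in_Delta_set: "0 \<le> \<epsilon> \<Longrightarrow> \<sigma>b \<in> Delta_set K f n \<alpha> \<epsilon>"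
  unfolding Delta_set_iff inj_perturbation_def using f first by auto

lemma mono_is_boundary_without_\<sigma>b: "mono (\<lambda>S. is_boundary K (S - {\<sigma>b}) n \<alpha>)"
  by (rule mono_is_boundary) blast

lemma first_without_\<sigma>b:
  assumes \<rho>: "first_at K f (\<lambda>S. is_boundary K (S - {\<sigma>b}) n \<alpha>) \<rho>"
  shows "card \<rho> = Suc (Suc n)" and "b < f \<rho>"
proof -
  have "is_boundary K (S \<inter> {\<sigma>. card \<sigma> = Suc (Suc n)} - {\<sigma>b}) n \<alpha>"
    if "is_boundary K (S - {\<sigma>b}) n \<alpha>" for S
    using that by (rule is_boundary_if_top_subset) blast
  from first_at_in[OF finite_K mono_is_boundary_without_\<sigma>b inj_f this \<rho>]
  show "card \<rho> = Suc (Suc n)"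
    by simp
  show "b < f \<rho>"
  proof (rule ccontr)
    assume "\<not> b < f \<rho>"
    have "sublevel K f (f \<rho>) - {\<sigma>b} \<subseteq> strict_sublevel K f b"
    proof
      fix \<sigma> assume "\<sigma> \<in> sublevel K f (f \<rho>) - {\<sigma>b}"
      then have "\<sigma> \<in> K" "f \<sigma> \<le> b" "f \<sigma> \<noteq> b"
        using \<open>\<not> b < f \<rho>\<close> f_eq_iff[OF _ \<sigma>b_in_K] f_\<sigma>b unfolding sublevel_def by auto
      then show "\<sigma> \<in> strict_sublevel K f b"
        unfolding strict_sublevel_def by simp
    qed
    moreover have "is_boundary K (sublevel K f (f \<rho>) - {\<sigma>b}) n \<alpha>"
      using \<rho> unfolding first_at_def by blast
    ultimately have "is_boundary K (strict_sublevel K f b) n \<alpha>"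
      by (rule is_boundary_mono)
    then show False
      using not_is_boundary_strict_sublevel_b by blast
  qed
qed

lemma birth_simplex_if_first_without_\<sigma>b:
  assumes \<rho>: "first_at K f (\<lambda>S. is_boundary K (S - {\<sigma>b}) n \<alpha>) \<rho>"
  shows "birth_simplex K f TYPE('k) \<rho>"
proof -
  let ?M = "strict_sublevel K f (f \<rho>)"
  have \<rho>K: "\<rho> \<in> K"
    using \<rho> unfolding first_at_def by blast
  have "sublevel K f b \<subseteq> ?M"
    using first_without_\<sigma>b(2)[OF \<rho>] unfolding sublevel_def strict_sublevel_def by auto
  then have "is_boundary K ?M n \<alpha>"
    using is_boundary_sublevel_b by (rule is_boundary_mono)
  moreover have "sublevel K f (f \<rho>) - {\<sigma>b} \<subseteq> insert \<rho> (?M - {\<sigma>b})"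
    using sublevel_eq_insert_strict_sublevel[OF inj_f \<rho>K] by blast
  then have "is_boundary K (insert \<rho> (?M - {\<sigma>b})) n \<alpha>"
    by (rule is_boundary_mono) (use \<rho> in \<open>simp add: first_at_def\<close>)
  moreover have "\<not> is_boundary K (?M - {\<sigma>b}) n \<alpha>"
    using first_at_not_strict[OF finite_K \<rho>] .
  ultimately have "is_boundary K ?M n (bd K (elem_chain \<rho> :: 'v set \<Rightarrow> 'k))"
    by (rule is_boundary_bd_elem_chain) blast
  then show ?thesis
    unfolding birth_simplex_def using \<rho>K first_without_\<sigma>b(1)[OF \<rho>] by simp
qed

lemma Delta_set_if_first_without_\<sigma>b:
  assumes \<rho>: "first_at K f (\<lambda>S. is_boundary K (S - {\<sigma>b}) n \<alpha>) \<rho>" and \<epsilon>: "(f \<rho> - b) / 2 < \<epsilon>"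
  shows "\<rho> \<in> Delta_set K f n \<alpha> \<epsilon>"
proof -
  let ?N = "{\<sigma>. card \<sigma> = Suc (Suc n)}"
  have \<rho>K: "\<rho> \<in> K" and card_\<rho>: "card \<rho> = Suc (Suc n)" and "b < f \<rho>"
    using \<rho> first_without_\<sigma>b[OF \<rho>] unfolding first_at_def by blast+
  obtain e where e: "(f \<rho> - b) / 2 < e"
    and g: "inj_perturbation K f \<epsilon> (\<lambda>\<sigma>. if \<sigma> \<in> {\<sigma>. \<sigma>b \<subseteq> \<sigma>} then f \<sigma> + e else f \<sigma> - e)"
    using exists_shift_perturbation[OF finite_K f _ _ \<epsilon>, of "{\<sigma>. \<sigma>b \<subseteq> \<sigma>}"] \<open>b < f \<rho>\<close> by force
  define g where "g = (\<lambda>\<sigma>. if \<sigma> \<in> {\<sigma>. \<sigma>b \<subseteq> \<sigma>} then f \<sigma> + e else f \<sigma> - e)"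
  have g_top: "g \<sigma> = f \<sigma> - e" if "\<sigma> \<in> K" "\<sigma> \<in> ?N" "\<sigma> \<noteq> \<sigma>b" for \<sigma>
    using eq_\<sigma>b_if_comparable[of \<sigma>] that unfolding g_def by auto
  have g_\<sigma>b: "g \<sigma>b = b + e"
    using f_\<sigma>b unfolding g_def by simp
  have g_\<rho>: "g \<rho> = f \<rho> - e"
    using g_top[OF \<rho>K] card_\<rho> \<open>b < f \<rho>\<close> f_\<sigma>b by auto
  have "is_boundary K (sublevel K g (g \<rho>)) n \<alpha>"
  proof (rule is_boundary_if_top_subset)
    show "is_boundary K (sublevel K f (f \<rho>) - {\<sigma>b}) n \<alpha>"
      using \<rho> unfolding first_at_def by blast
    show "(sublevel K f (f \<rho>) - {\<sigma>b}) \<inter> ?N \<subseteq> sublevel K g (g \<rho>)"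
    proof
      fix \<sigma> assume \<sigma>: "\<sigma> \<in> (sublevel K f (f \<rho>) - {\<sigma>b}) \<inter> ?N"
      then have "g \<sigma> = f \<sigma> - e"
        using g_top unfolding sublevel_def by blast
      then show "\<sigma> \<in> sublevel K g (g \<rho>)"
        using \<sigma> g_\<rho> unfolding sublevel_def by auto
    qed
  qed
  moreover have "\<not> is_boundary K (sublevel K g r) n \<alpha>" if "r < g \<rho>" for r
  proof
    assume "is_boundary K (sublevel K g r) n \<alpha>"
    moreover have "sublevel K g r \<inter> ?N \<subseteq> strict_sublevel K f (f \<rho>) - {\<sigma>b}"
    proof
      fix \<sigma> assume \<sigma>: "\<sigma> \<in> sublevel K g r \<inter> ?N"
      have "\<sigma> \<noteq> \<sigma>b"
        using \<sigma> that g_\<sigma>b g_\<rho> e unfolding sublevel_def by auto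
      moreover have "g \<sigma> = f \<sigma> - e"
        using g_top \<sigma> calculation unfolding sublevel_def by blast
      ultimately show "\<sigma> \<in> strict_sublevel K f (f \<rho>) - {\<sigma>b}"
        using \<sigma> that g_\<rho> unfolding sublevel_def strict_sublevel_def by auto
    qed
    ultimately have "is_boundary K (strict_sublevel K f (f \<rho>) - {\<sigma>b}) n \<alpha>"
      by (rule is_boundary_if_top_subset)
    then show False
      using first_at_not_strict[OF finite_K \<rho>] by blast
  qed
  ultimately show ?thesis
    unfolding Delta_set_iff first_at_def using g \<rho>K unfolding g_def by blast
qed

lemma mono_is_boundary_with_\<sigma>b: "mono (\<lambda>S. is_boundary K (insert \<sigma>b S) n \<alpha>)"
  by (rule mono_is_boundary) blast

lemma first_with_\<sigma>b:
  assumes \<rho>: "first_at K f (\<lambda>S. is_boundary K (insert \<sigma>b S) n \<alpha>) \<rho>"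
  shows "card \<rho> = Suc (Suc n)" and "f \<rho> < b"
proof -
  have "is_boundary K (insert \<sigma>b (S \<inter> {\<sigma>. card \<sigma> = Suc (Suc n)})) n \<alpha>"
    if "is_boundary K (insert \<sigma>b S) n \<alpha>" for S
    using that by (rule is_boundary_if_top_subset) blast
  from first_at_in[OF finite_K mono_is_boundary_with_\<sigma>b inj_f this \<rho>]
  show "card \<rho> = Suc (Suc n)"
    by simp
  have \<rho>K: "\<rho> \<in> K"
    using \<rho> unfolding first_at_def by blast
  have "insert \<sigma>b (sublevel K f b) = sublevel K f b"
    using \<sigma>b_in_K f_\<sigma>b unfolding sublevel_def by auto
  then have "f \<rho> \<le> b"
    using first_at_le[OF \<rho>] is_boundary_sublevel_b by simp
  moreover have "\<rho> \<noteq> \<sigma>b"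
  proof
    assume "\<rho> = \<sigma>b"
    then have "insert \<sigma>b (sublevel K f (f \<rho>)) = insert \<sigma>b (strict_sublevel K f (f \<rho>))"
      using sublevel_eq_insert_strict_sublevel[OF inj_f \<rho>K] by simp
    then show False
      using \<rho> first_at_not_strict[OF finite_K \<rho>] unfolding first_at_def by simp
  qed
  ultimately show "f \<rho> < b"
    using f_eq_iff[OF \<rho>K \<sigma>b_in_K] f_\<sigma>b by fastforce
qed

lemma terminal_simplex_if_first_with_\<sigma>b:
  assumes \<rho>: "first_at K f (\<lambda>S. is_boundary K (insert \<sigma>b S) n \<alpha>) \<rho>"
  shows "terminal_simplex K f TYPE('k) \<rho>"
proof -
  let ?M = "strict_sublevel K f (f \<rho>)"
  define z where "z = bd K (elem_chain \<rho> :: 'v set \<Rightarrow> 'k)"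
  have \<rho>K: "\<rho> \<in> K" and card_\<rho>: "card \<rho> = Suc (Suc n)"
    using \<rho> first_with_\<sigma>b(1)[OF \<rho>] unfolding first_at_def by blast+
  have "z \<in> Defs.chains ?M n"
    using bd_elem_chain_in_chains[OF K \<rho>K card_\<rho>] chains_mono[OF proper_faces_strict_sublevel[OF \<rho>K]]
    unfolding z_def by blast
  then have "is_cycle K ?M n z"
    unfolding is_cycle_def z_def using bd_bd_elem_chain[OF K \<rho>K] by auto
  moreover have "\<not> is_boundary K ?M n z"
  proof
    assume "is_boundary K ?M n z"
    then have "is_boundary K (insert \<sigma>b ?M) n z"
      by (rule is_boundary_mono[rotated]) blast
    moreover have "is_boundary K (insert \<rho> (insert \<sigma>b ?M)) n \<alpha>"
      using \<rho> sublevel_eq_insert_strict_sublevel[OF inj_f \<rho>K] unfolding first_at_def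
      by (simp add: insert_commute)
    ultimately have "is_boundary K (insert \<sigma>b ?M) n \<alpha>"
      unfolding z_def by (rule is_boundary_replace_simplex)
    then show False
      using first_at_not_strict[OF finite_K \<rho>] by blast
  qed
  moreover have "is_boundary K (insert \<rho> ?M) n z"
    unfolding is_boundary_def z_def
    using elem_chain_in_chains[OF card_\<rho>] chains_mono[of "{\<rho>}" "insert \<rho> ?M"] by blast
  ultimately show ?thesis
    unfolding terminal_simplex_def using \<rho>K card_\<rho> by auto
qed

lemma Delta_set_if_first_with_\<sigma>b:
  assumes \<rho>: "first_at K f (\<lambda>S. is_boundary K (insert \<sigma>b S) n \<alpha>) \<rho>" and \<epsilon>: "(b - f \<rho>) / 2 < \<epsilon>"
  shows "\<rho> \<in> Delta_set K f n \<alpha> \<epsilon>"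
proof -
  let ?N = "{\<sigma>. card \<sigma> = Suc (Suc n)}"
  have \<rho>K: "\<rho> \<in> K" and card_\<rho>: "card \<rho> = Suc (Suc n)" and "f \<rho> < b"
    using \<rho> first_with_\<sigma>b[OF \<rho>] unfolding first_at_def by blast+
  have up: "\<tau> \<in> {\<sigma>. \<not> \<sigma> \<subseteq> \<sigma>b}" if "\<sigma> \<subseteq> \<tau>" "\<sigma> \<in> {\<sigma>. \<not> \<sigma> \<subseteq> \<sigma>b}" for \<sigma> \<tau>
    using that by blast
  obtain e where e: "(b - f \<rho>) / 2 < e"
    and g: "inj_perturbation K f \<epsilon> (\<lambda>\<sigma>. if \<sigma> \<in> {\<sigma>. \<not> \<sigma> \<subseteq> \<sigma>b} then f \<sigma> + e else f \<sigma> - e)"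
    using exists_shift_perturbation[OF finite_K f up _ \<epsilon>] \<open>f \<rho> < b\<close> by force
  define g where "g = (\<lambda>\<sigma>. if \<sigma> \<in> {\<sigma>. \<not> \<sigma> \<subseteq> \<sigma>b} then f \<sigma> + e else f \<sigma> - e)"
  have g_top: "g \<sigma> = f \<sigma> + e" if "\<sigma> \<in> K" "\<sigma> \<in> ?N" "\<sigma> \<noteq> \<sigma>b" for \<sigma>
    using eq_\<sigma>b_if_comparable[of \<sigma>] that unfolding g_def by auto
  have g_\<sigma>b: "g \<sigma>b = b - e"
    using f_\<sigma>b unfolding g_def by simp
  have g_\<rho>: "g \<rho> = f \<rho> + e"
    using g_top[OF \<rho>K] card_\<rho> \<open>f \<rho> < b\<close> f_\<sigma>b by auto
  have "is_boundary K (sublevel K g (g \<rho>)) n \<alpha>"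
  proof (rule is_boundary_if_top_subset)
    show "is_boundary K (insert \<sigma>b (sublevel K f (f \<rho>))) n \<alpha>"
      using \<rho> unfolding first_at_def by blast
    show "insert \<sigma>b (sublevel K f (f \<rho>)) \<inter> ?N \<subseteq> sublevel K g (g \<rho>)"
    proof
      fix \<sigma> assume \<sigma>: "\<sigma> \<in> insert \<sigma>b (sublevel K f (f \<rho>)) \<inter> ?N"
      show "\<sigma> \<in> sublevel K g (g \<rho>)"
      proof (cases "\<sigma> = \<sigma>b")
        case True
        then show ?thesis
          using \<sigma>b_in_K g_\<sigma>b g_\<rho> e unfolding sublevel_def by auto
      next
        case False
        then have "g \<sigma> = f \<sigma> + e"
          using g_top \<sigma> unfolding sublevel_def by blast
        then show ?thesis
          using \<sigma> False g_\<rho> unfolding sublevel_def by auto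
      qed
    qed
  qed
  moreover have "\<not> is_boundary K (sublevel K g r) n \<alpha>" if "r < g \<rho>" for r
  proof
    assume "is_boundary K (sublevel K g r) n \<alpha>"
    moreover have "sublevel K g r \<inter> ?N \<subseteq> insert \<sigma>b (strict_sublevel K f (f \<rho>))"
    proof
      fix \<sigma> assume \<sigma>: "\<sigma> \<in> sublevel K g r \<inter> ?N"
      show "\<sigma> \<in> insert \<sigma>b (strict_sublevel K f (f \<rho>))"
      proof (cases "\<sigma> = \<sigma>b")
        case False
        then have "g \<sigma> = f \<sigma> + e"
          using g_top \<sigma> unfolding sublevel_def by blast
        then show ?thesis
          using \<sigma> that g_\<rho> unfolding sublevel_def strict_sublevel_def by auto
      qed simp
    qed
    ultimately have "is_boundary K (insert \<sigma>b (strict_sublevel K f (f \<rho>))) n \<alpha>"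
      by (rule is_boundary_if_top_subset)
    then show False
      using first_at_not_strict[OF finite_K \<rho>] by blast
  qed
  ultimately show ?thesis
    unfolding Delta_set_iff first_at_def using g \<rho>K unfolding g_def by blast
qed

text \<open>A rival is a candidate for the partner of \<Delta>1 in the pair {\<sigma>i, \<sigma>j}: it replaces \<sigma>b as
  \<Delta>_{g,\<alpha>} as soon as \<epsilon> exceeds half its distance from b.\<close>

definition rival :: "'v set \<Rightarrow> bool" where
  "rival \<rho> \<longleftrightarrow> \<rho> \<in> K \<and> card \<rho> = Suc (Suc n) \<and> \<rho> \<noteq> \<sigma>b \<and>
     (b < f \<rho> \<longrightarrow> birth_simplex K f TYPE('k) \<rho>) \<and>
     (f \<rho> < b \<longrightarrow> terminal_simplex K f TYPE('k) \<rho>) \<and>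
     (\<forall>\<epsilon>. \<bar>f \<rho> - b\<bar> < 2 * \<epsilon> \<longrightarrow> \<rho> \<in> Delta_set K f n \<alpha> \<epsilon>)"

lemma rival_birth_or_terminal:
  assumes "rival \<rho>"
  shows "(b < f \<rho> \<and> birth_simplex K f TYPE('k) \<rho>) \<or> (f \<rho> < b \<and> terminal_simplex K f TYPE('k) \<rho>)"
proof -
  have "f \<rho> \<noteq> b"
    using assms f_eq_iff[OF _ \<sigma>b_in_K] f_\<sigma>b unfolding rival_def by auto
  then show ?thesis
    using assms unfolding rival_def by (auto simp: neq_iff)
qed

lemma rival_above:
  assumes "is_boundary K (sublevel K f r - {\<sigma>b}) n \<alpha>"
  shows "\<exists>\<rho>. rival \<rho> \<and> b < f \<rho> \<and> f \<rho> \<le> r"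
proof -
  obtain \<rho> where \<rho>: "first_at K f (\<lambda>S. is_boundary K (S - {\<sigma>b}) n \<alpha>) \<rho>" "f \<rho> \<le> r"
    using first_at_exists[OF finite_K mono_is_boundary_without_\<sigma>b _ assms] not_is_boundary_empty
    by auto
  then have "rival \<rho>"
    unfolding rival_def
    using first_without_\<sigma>b[OF \<rho>(1)] birth_simplex_if_first_without_\<sigma>b[OF \<rho>(1)]
      Delta_set_if_first_without_\<sigma>b[OF \<rho>(1)] f_\<sigma>b by (auto simp: first_at_def)
  then show ?thesis
    using first_without_\<sigma>b(2)[OF \<rho>(1)] \<rho>(2) by blast
qed

lemma rival_below:
  assumes "\<not> is_boundary K {\<sigma>b} n \<alpha>"
  shows "\<exists>\<rho>. rival \<rho> \<and> f \<rho> < b \<and> is_boundary K (insert \<sigma>b (sublevel K f (f \<rho>))) n \<alpha>"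
proof -
  have "insert \<sigma>b (sublevel K f b) = sublevel K f b"
    using \<sigma>b_in_K f_\<sigma>b unfolding sublevel_def by auto
  then have "is_boundary K (insert \<sigma>b (sublevel K f b)) n \<alpha>"
    using is_boundary_sublevel_b by simp
  then obtain \<rho> where \<rho>: "first_at K f (\<lambda>S. is_boundary K (insert \<sigma>b S) n \<alpha>) \<rho>"
    using first_at_exists[OF finite_K mono_is_boundary_with_\<sigma>b] assms by auto
  then have "rival \<rho>"
    unfolding rival_def
    using first_with_\<sigma>b[OF \<rho>] terminal_simplex_if_first_with_\<sigma>b[OF \<rho>]
      Delta_set_if_first_with_\<sigma>b[OF \<rho>] f_\<sigma>b by (auto simp: first_at_def)
  then show ?thesis
    using first_with_\<sigma>b(2)[OF \<rho>] \<rho> unfolding first_at_def by blast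
qed

text \<open>Whichever of \<rho> and \<sigma>b comes first under the perturbation g decides on which side
  of b the rival is found.\<close>

lemma exists_close_rival:
  assumes "\<rho> \<in> Delta_set K f n \<alpha> x" "\<rho> \<noteq> \<sigma>b"
  shows "\<exists>\<rho>'. rival \<rho>' \<and> \<bar>f \<rho>' - b\<bar> < 2 * x"
proof -
  obtain g where g: "inj_perturbation K f x g" and \<rho>: "first_at K g (\<lambda>S. is_boundary K S n \<alpha>) \<rho>"
    using assms(1) unfolding Delta_set_iff by blast
  have close: "\<bar>f \<sigma> - g \<sigma>\<bar> \<le> x" if "\<sigma> \<in> K" for \<sigma>
    using g that unfolding inj_perturbation_def by blast
  have "g \<rho> \<noteq> g \<sigma>b"
    using g \<rho> assms(2) \<sigma>b_in_K unfolding inj_perturbation_def injective_filtration_def first_at_def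
    by (metis inj_on_eq_iff)
  then consider "g \<rho> < g \<sigma>b" | "g \<sigma>b < g \<rho>"
    by linarith
  then show ?thesis
  proof cases
    case 1
    have "sublevel K g (g \<rho>) \<subseteq> sublevel K f (g \<rho> + x) - {\<sigma>b}"
      using close 1 unfolding sublevel_def by fastforce
    then have "is_boundary K (sublevel K f (g \<rho> + x) - {\<sigma>b}) n \<alpha>"
      by (rule is_boundary_mono) (use \<rho> in \<open>simp add: first_at_def\<close>)
    then obtain \<rho>' where "rival \<rho>'" "b < f \<rho>'" "f \<rho>' \<le> g \<rho> + x"
      using rival_above by blast
    moreover have "g \<sigma>b \<le> b + x"
      using close[OF \<sigma>b_in_K] f_\<sigma>b by simp
    ultimately show ?thesis
      using 1 by force
  next
    case 2
    have "\<not> is_boundary K {\<sigma>b} n \<alpha>"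
    proof
      assume "is_boundary K {\<sigma>b} n \<alpha>"
      then have "is_boundary K (sublevel K g (g \<sigma>b)) n \<alpha>"
        by (rule is_boundary_mono[rotated]) (use \<sigma>b_in_K in \<open>simp add: sublevel_def\<close>)
      then show False
        using \<rho> 2 unfolding first_at_def by blast
    qed
    then obtain \<rho>' where \<rho>': "rival \<rho>'" "f \<rho>' < b"
      and bd_\<rho>': "is_boundary K (insert \<sigma>b (sublevel K f (f \<rho>'))) n \<alpha>"
      using rival_below by blast
    have "b - f \<rho>' < 2 * x"
    proof (rule ccontr)
      assume "\<not> b - f \<rho>' < 2 * x"
      then have "insert \<sigma>b (sublevel K f (f \<rho>')) \<subseteq> sublevel K g (g \<sigma>b)"
        using close close[OF \<sigma>b_in_K] \<sigma>b_in_K f_\<sigma>b unfolding sublevel_def by fastforce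
      then have "is_boundary K (sublevel K g (g \<sigma>b)) n \<alpha>"
        using bd_\<rho>' by (rule is_boundary_mono)
      then show False
        using \<rho> 2 unfolding first_at_def by blast
    qed
    then show ?thesis
      using \<rho>' by force
  qed
qed

lemma Delta_set_eq_singleton_iff:
  assumes "0 \<le> x"
  shows "Delta_set K f n \<alpha> x = {\<sigma>b} \<longleftrightarrow> (\<forall>\<rho>. rival \<rho> \<longrightarrow> 2 * x \<le> \<bar>f \<rho> - b\<bar>)"
proof
  assume "Delta_set K f n \<alpha> x = {\<sigma>b}"
  then show "\<forall>\<rho>. rival \<rho> \<longrightarrow> 2 * x \<le> \<bar>f \<rho> - b\<bar>"
    unfolding rival_def by (metis not_le singletonD)
next
  assume far: "\<forall>\<rho>. rival \<rho> \<longrightarrow> 2 * x \<le> \<bar>f \<rho> - b\<bar>"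
  have "\<rho> = \<sigma>b" if "\<rho> \<in> Delta_set K f n \<alpha> x" for \<rho>
    using exists_close_rival[OF that] far by (meson not_le)
  then show "Delta_set K f n \<alpha> x = {\<sigma>b}"
    using \<sigma>b_in_Delta_set[OF assms] by blast
qed

lemma Delta_set_eq_singleton_antimono:
  "0 \<le> x \<Longrightarrow> x \<le> t \<Longrightarrow> Delta_set K f n \<alpha> t = {\<sigma>b} \<Longrightarrow> Delta_set K f n \<alpha> x = {\<sigma>b}"
  using Delta_set_eq_singleton_iff[of x] Delta_set_eq_singleton_iff[of t] by force

lemma rival_at_critical_scale:
  assumes t0: "0 \<le> t0" "t0 < B" "Delta_set K f n \<alpha> t0 = {\<sigma>b}"
    and above: "\<And>x. t0 < x \<Longrightarrow> x \<le> B \<Longrightarrow> Delta_set K f n \<alpha> x \<noteq> {\<sigma>b}"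
  shows "\<exists>\<rho>. rival \<rho> \<and> \<bar>f \<rho> - b\<bar> = 2 * t0"
proof -
  have "finite {\<rho>. rival \<rho>}"
    by (rule finite_subset[OF _ finite_K]) (auto simp: rival_def)
  moreover have "{\<rho>. rival \<rho>} \<noteq> {}"
    using above[OF t0(2) order_refl] Delta_set_eq_singleton_iff[of B] t0 by auto
  ultimately obtain \<rho> where \<rho>: "rival \<rho>"
    and min: "\<And>\<rho>'. rival \<rho>' \<Longrightarrow> \<bar>f \<rho> - b\<bar> \<le> \<bar>f \<rho>' - b\<bar>"
    using ex_is_arg_min_if_finite[of "{\<rho>. rival \<rho>}" "\<lambda>\<rho>. \<bar>f \<rho> - b\<bar>"]
    unfolding is_arg_min_def by (metis mem_Collect_eq not_less)
  have "2 * t0 \<le> \<bar>f \<rho> - b\<bar>"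
    using t0 \<rho> Delta_set_eq_singleton_iff by blast
  moreover have "\<not> 2 * t0 < \<bar>f \<rho> - b\<bar>"
  proof
    assume "2 * t0 < \<bar>f \<rho> - b\<bar>"
    define x where "x = min (\<bar>f \<rho> - b\<bar> / 2) B"
    have "t0 < x" "x \<le> B"
      using \<open>2 * t0 < \<bar>f \<rho> - b\<bar>\<close> t0 unfolding x_def by auto
    have "x \<le> \<bar>f \<rho> - b\<bar> / 2"
      unfolding x_def by (rule min.cobounded1)
    then have "\<forall>\<rho>'. rival \<rho>' \<longrightarrow> 2 * x \<le> \<bar>f \<rho>' - b\<bar>"
      using min by fastforce
    then have "Delta_set K f n \<alpha> x = {\<sigma>b}"
      using Delta_set_eq_singleton_iff[of x] t0(1) \<open>t0 < x\<close> by simp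
    then show False
      using above \<open>t0 < x\<close> \<open>x \<le> B\<close> by blast
  qed
  ultimately show ?thesis
    using \<rho> by force
qed

lemma rival_at_last_singleton_scale:
  assumes t0: "0 < t0" "Delta_set K f n \<alpha> t0 = {\<sigma>b}"
    and big: "\<exists>x\<in>{0<..B}. card (Delta_set K f n \<alpha> x) \<ge> 2"
    and last: "\<forall>x\<in>{0<..B}. card (Delta_set K f n \<alpha> x) = 1 \<longrightarrow> x \<le> t0"
  shows "\<exists>\<rho>. rival \<rho> \<and> \<bar>f \<rho> - b\<bar> = 2 * t0"
proof (rule rival_at_critical_scale)
  show "t0 < B"
  proof (rule ccontr)
    assume "\<not> t0 < B"
    obtain x where x: "x \<in> {0<..B}" "card (Delta_set K f n \<alpha> x) \<ge> 2"
      using big by blast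
    have "Delta_set K f n \<alpha> x = {\<sigma>b}"
      by (rule Delta_set_eq_singleton_antimono[OF _ _ t0(2)]) (use x(1) \<open>\<not> t0 < B\<close> in auto)
    then show False
      using x(2) by simp
  qed
  show "Delta_set K f n \<alpha> x \<noteq> {\<sigma>b}" if "t0 < x" "x \<le> B" for x
  proof
    assume "Delta_set K f n \<alpha> x = {\<sigma>b}"
    then have "x \<le> t0"
      using last that t0(1) by simp
    then show False
      using that(1) by simp
  qed
qed (use t0 in auto)

lemma \<sigma>b_not_proper_face:
  assumes t0: "Delta_set K f n \<alpha> t0 = {\<sigma>b}" "s < t0" and \<tau>: "\<tau> \<in> K" "f \<tau> \<le> b + 2 * s"
  shows "\<not> \<sigma>b \<subset> \<tau>"
proof
  assume "\<sigma>b \<subset> \<tau>"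
  then obtain w where "w \<in> \<tau>" "w \<notin> \<sigma>b"
    by blast
  define \<tau>' where "\<tau>' = insert w \<sigma>b"
  have \<tau>'K: "\<tau>' \<in> K"
    using simplicial_complex_face[OF K \<tau>(1)] \<open>\<sigma>b \<subset> \<tau>\<close> \<open>w \<in> \<tau>\<close> unfolding \<tau>'_def by auto
  have "f \<tau>' \<le> f \<tau>"
    using f_mono[OF \<tau>'K \<tau>(1)] \<open>\<sigma>b \<subset> \<tau>\<close> \<open>w \<in> \<tau>\<close> unfolding \<tau>'_def by auto
  have "is_boundary K (sublevel K f b \<union> {\<sigma>\<in>K. \<sigma> \<subset> \<tau>'} - {\<sigma>b}) n \<alpha>"
    using is_boundary_avoiding_facet[OF K is_boundary_sublevel_b \<tau>'K] \<tau>'_def \<open>w \<notin> \<sigma>b\<close> by blast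
  moreover have "b \<le> f \<tau>'"
    using f_mono[OF \<sigma>b_in_K \<tau>'K] f_\<sigma>b unfolding \<tau>'_def by blast
  then have "sublevel K f b \<union> {\<sigma>\<in>K. \<sigma> \<subset> \<tau>'} \<subseteq> sublevel K f (f \<tau>')"
    using f_mono[OF _ \<tau>'K] unfolding sublevel_def by auto
  then have "sublevel K f b \<union> {\<sigma>\<in>K. \<sigma> \<subset> \<tau>'} - {\<sigma>b} \<subseteq> sublevel K f (f \<tau>') - {\<sigma>b}"
    by blast
  ultimately have "is_boundary K (sublevel K f (f \<tau>') - {\<sigma>b}) n \<alpha>"
    by (rule is_boundary_mono[rotated])
  then obtain \<rho> where "rival \<rho>" "b < f \<rho>" "f \<rho> \<le> f \<tau>'"
    using rival_above by blast
  then have "\<bar>f \<rho> - b\<bar> < 2 * t0"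
    using \<open>f \<tau>' \<le> f \<tau>\<close> \<tau>(2) t0(2) by auto
  moreover have "0 \<le> t0"
    using \<open>rival \<rho>\<close> \<open>\<bar>f \<rho> - b\<bar> < 2 * t0\<close> by linarith
  ultimately show False
    using \<open>rival \<rho>\<close> t0(1) Delta_set_eq_singleton_iff by force
qed

end

theorem proposition3p4:
  fixes K :: "'v::linorder set set" and f :: "'v set \<Rightarrow> real" and n :: nat
    and \<alpha> :: "'v set \<Rightarrow> 'k::field" and a b t0 :: real and \<Delta>1 :: "'v set"
  assumes K: "simplicial_complex K"
    and n: "n > 0"
    and f: "generic K f"
    and cyc: "is_cycle K (sublevel K f a) n \<alpha>"
    and nontriv: "\<not> is_boundary K (sublevel K f a) n \<alpha>"
    and born: "born_at K f n \<alpha> a a"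
    and termd: "terminated_at K f n \<alpha> a b"
    and ab: "b > a"
    and big: "\<exists>x\<in>{0<..(b - a) / 2}. card (Delta_set K f n \<alpha> x) \<ge> 2"
    and t0_mem: "t0 \<in> {0<..(b - a) / 2}" and t0_card: "card (Delta_set K f n \<alpha> t0) = 1"
    and t0_max: "\<forall>x\<in>{0<..(b - a) / 2}. card (Delta_set K f n \<alpha> x) = 1 \<longrightarrow> x \<le> t0"
    and Delta1: "Delta_set K f n \<alpha> t0 = {\<Delta>1}"
  shows "\<exists>\<sigma>i \<sigma>j. \<sigma>i \<in> K \<and> card \<sigma>i = n + 2 \<and> \<sigma>j \<in> K \<and> card \<sigma>j = n + 2 \<and>
           f \<sigma>j - t0 = f \<sigma>i + t0 \<and>
           \<Delta>1 \<in> {\<sigma>i, \<sigma>j} \<and>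
           (\<forall>s < t0. \<forall>\<tau>\<in>K. f \<tau> \<le> f \<Delta>1 + 2 * s \<longrightarrow> \<not> \<Delta>1 \<subset> \<tau>) \<and>
           (\<forall>t. t \<in> {0<..(b - a) / 2} \<and> t > t0 \<and>
                ((\<lambda>x. real (card (Delta_set K f n \<alpha> x))) \<longlongrightarrow> real (card (Delta_set K f n \<alpha> t))) (at_right t0)
              \<longrightarrow> (\<Delta>1 = \<sigma>j \<longrightarrow> {\<sigma>i, \<sigma>j} \<subseteq> Delta_set K f n \<alpha> t \<and> terminal_simplex K f TYPE('k) \<sigma>i) \<and>
                  (\<Delta>1 = \<sigma>i \<longrightarrow> {\<sigma>i, \<sigma>j} \<subseteq> Delta_set K f n \<alpha> t \<and> birth_simplex K f TYPE('k) \<sigma>j))"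
proof -
  obtain \<sigma>b where \<sigma>b: "first_at K f (\<lambda>S. is_boundary K S n \<alpha>) \<sigma>b" "f \<sigma>b = b"
    using first_at_termination[OF simplicial_complex_finite[OF K] nontriv termd] by blast
  interpret cycle_death K f n \<alpha> \<sigma>b b
    using K f \<sigma>b unfolding generic_def by unfold_locales blast+
  have t0: "0 < t0" "Delta_set K f n \<alpha> t0 = {\<sigma>b}" "\<Delta>1 = \<sigma>b"
    using t0_mem Delta1 \<sigma>b_in_Delta_set[of t0] by auto
  obtain \<rho> where \<rho>: "rival \<rho>" "\<bar>f \<rho> - b\<bar> = 2 * t0"
    using rival_at_last_singleton_scale[OF t0(1,2) big t0_max] by blast
  have in_Delta: "{\<rho>, \<sigma>b} \<subseteq> Delta_set K f n \<alpha> t" if "t0 < t" for t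
    using \<rho> that t0(1) \<sigma>b_in_Delta_set unfolding rival_def by auto
  have maximal: "\<forall>s < t0. \<forall>\<tau>\<in>K. f \<tau> \<le> f \<Delta>1 + 2 * s \<longrightarrow> \<not> \<Delta>1 \<subset> \<tau>"
    using \<sigma>b_not_proper_face t0 f_\<sigma>b by auto
  have simplices: "\<sigma>b \<in> K" "card \<sigma>b = n + 2" "\<rho> \<in> K" "card \<rho> = n + 2" "\<rho> \<noteq> \<sigma>b"
    using \<sigma>b_in_K card_\<sigma>b \<rho>(1) unfolding rival_def by auto
  from rival_birth_or_terminal[OF \<rho>(1)] show ?thesis
  proof
    assume "b < f \<rho> \<and> birth_simplex K f TYPE('k) \<rho>"
    then show ?thesis
      using \<rho>(2) f_\<sigma>b simplices in_Delta maximal t0(3) by (intro exI[of _ \<sigma>b] exI[of _ \<rho>]) auto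
  next
    assume "f \<rho> < b \<and> terminal_simplex K f TYPE('k) \<rho>"
    then show ?thesis
      using \<rho>(2) f_\<sigma>b simplices in_Delta maximal t0(3) by (intro exI[of _ \<rho>] exI[of _ \<sigma>b]) auto
  qed
qed

end
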